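(* Let $x$ be a grid function with $x_s\neq 0$ at every node that satisfies the scheme (S) with $\check B\equiv 0$. Then at every node the discrete center-of-mass law $$(t\,x_t-x)_{\check t}+\Big(t\,(\hat x_s\check x_s)^{-1}-t\,\alpha^2 x_s\Big)_{\bar s}=0$$ holds (here $t$ is the time coordinate of the node, so $(t x_t-x)_{\check t}=\big(t x_t-x-(t-\tau)\check x_t+\check x\big)/\tau$).
   Context: Fix mesh steps $\tau>0$, $h>0$ and a constant $\alpha\in\mathbb R$. A grid function is a real-valued function $f=f(t,s)$ on the uniform orthogonal mesh $\{(n\tau,kh): n,k\in\mathbb Z\}$; at the node $(n\tau,kh)$ the symbol $t$ denotes the number $n\tau$. Shifts: $\hat f=f(t+\tau,s)$, $\check f=f(t-\tau,s)$, $f^+=f_+=f(t,s+h)$, $f^-=f_-=f(t,s-h)$; a shift applied to a composite expression shifts the whole expression (e.g. $\hat x_s$ is $x_s$ evaluated at $(t+\tau,s)$, $\check x_t$ is $x_t$ evaluated at $(t-\tau,s)$, $x_t^+$ is $x_t$ evaluated at $(t,s+h)$). Differences: $f_t=(\hat f-f)/\tau$, $f_{\check t}=(f-\check f)/\tau$, $f_s=(f_+-f)/h$, $f_{\bar s}=(f-f_-)/h$; iterated differences compose, e.g. $x_{t\check t}=(x_t)_{\check t}=(\hat x-2x+\check x)/\tau^2$ and $x_{s\bar s}=(x_s)_{\bar s}=(x_+-2x+x_-)/h^2$. Given a grid function $x$ with $x_s\neq0$ everywhere and a grid function $\check B$ (an approximation of the bottom-slope term), the scheme (S) is the requirement that at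 every node $$x_{t\check t}-\alpha^2x_{s\bar s}+\Big(\frac{1}{\hat x_s\check x_s}\Big)_{\bar s}-\check B=0 .$$ *)

theory Defs
  imports Complex_Main
begin

text \<open>Grid functions on the uniform mesh {(n tau, k h)}: a grid function is
  represented by its values at integer index pairs (n,k), i.e. f n k = f(n tau, k h).\<close>

type_synonym grid = "int \<Rightarrow> int \<Rightarrow> real"

definition shift_t :: "grid \<Rightarrow> grid" where
  "shift_t f = (\<lambda>n k. f (n + 1) k)"
definition shift_tb :: "grid \<Rightarrow> grid" where
  "shift_tb f = (\<lambda>n k. f (n - 1) k)"

definition d_t :: "real \<Rightarrow> grid \<Rightarrow> grid" where
  "d_t \<tau> f = (\<lambda>n k. (f (n + 1) k - f n k) / \<tau>)"
definition d_tb :: "real \<Rightarrow> grid \<Rightarrow> grid" where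
  "d_tb \<tau> f = (\<lambda>n k. (f n k - f (n - 1) k) / \<tau>)"
definition d_s :: "real \<Rightarrow> grid \<Rightarrow> grid" where
  "d_s h f = (\<lambda>n k. (f n (k + 1) - f n k) / h)"
definition d_sb :: "real \<Rightarrow> grid \<Rightarrow> grid" where
  "d_sb h f = (\<lambda>n k. (f n k - f n (k - 1)) / h)"

definition tgrid :: "real \<Rightarrow> grid" where
  "tgrid \<tau> = (\<lambda>n k. real_of_int n * \<tau>)"

text \<open>Scheme (S) at every node with a given grid function Bc (standing for \<check>B).\<close>
definition scheme_S :: "real \<Rightarrow> real \<Rightarrow> real \<Rightarrow> grid \<Rightarrow> grid \<Rightarrow> bool" where
  "scheme_S \<tau> h \<alpha> Bc x \<longleftrightarrow>
     (\<forall>n k. d_tb \<tau> (d_t \<tau> x) n k - \<alpha>\<^sup>2 * d_sb h (d_s h x) n k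
        + d_sb h (\<lambda>n k. 1 / (shift_t (d_s h x) n k * shift_tb (d_s h x) n k)) n k
        - Bc n k = 0)"

end

theory Submission
  imports Defs
begin

text \<open>The law is t times scheme (S). In time, the discrete product rule gives
  \<open>(t x\<^sub>t - x)\<^sub>\<check>t = t x\<^sub>t\<^sub>\<check>t + \<check>x\<^sub>t - x\<^sub>\<check>t\<close>, and \<open>\<check>x\<^sub>t = x\<^sub>\<check>t\<close>; in space, t is constant
  and commutes with the difference.\<close>

lemma d_tb_time_weighted_d_t:
  "d_tb \<tau> (\<lambda>n k. tgrid \<tau> n k * d_t \<tau> x n k - x n k)
     = (\<lambda>n k. tgrid \<tau> n k * d_tb \<tau> (d_t \<tau> x) n k)"
  by (cases "\<tau> = 0") (simp_all add: fun_eq_iff d_tb_def d_t_def tgrid_def field_simps of_int_diff)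

lemma d_sb_tgrid_mult:
  "d_sb h (\<lambda>n k. tgrid \<tau> n k * f n k) = (\<lambda>n k. tgrid \<tau> n k * d_sb h f n k)"
  by (simp add: fun_eq_iff d_sb_def tgrid_def field_simps)

lemma d_sb_diff:
  "d_sb h (\<lambda>n k. f n k - g n k) = (\<lambda>n k. d_sb h f n k - d_sb h g n k)"
  by (simp add: fun_eq_iff d_sb_def diff_divide_distrib)

lemma d_sb_const_mult:
  "d_sb h (\<lambda>n k. c * f n k) = (\<lambda>n k. c * d_sb h f n k)"
  by (simp add: fun_eq_iff d_sb_def algebra_simps)

theorem mainTheorem2:
  fixes \<tau> h \<alpha> :: real and x :: grid
  assumes "\<tau> > 0" and "h > 0"
    and "\<forall>n k. d_s h x n k \<noteq> 0"
    and "scheme_S \<tau> h \<alpha> (\<lambda>n k. 0) x"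
  shows "\<forall>n k.
    d_tb \<tau> (\<lambda>n k. tgrid \<tau> n k * d_t \<tau> x n k - x n k) n k
    + d_sb h (\<lambda>n k. tgrid \<tau> n k / (shift_t (d_s h x) n k * shift_tb (d_s h x) n k)
                  - tgrid \<tau> n k * \<alpha>\<^sup>2 * d_s h x n k) n k = 0"
proof (intro allI)
  fix n k
  define w where "w = (\<lambda>n k. 1 / (shift_t (d_s h x) n k * shift_tb (d_s h x) n k))"
  have flux: "(\<lambda>n k. tgrid \<tau> n k / (shift_t (d_s h x) n k * shift_tb (d_s h x) n k)
                  - tgrid \<tau> n k * \<alpha>\<^sup>2 * d_s h x n k)
            = (\<lambda>n k. tgrid \<tau> n k * (w n k - \<alpha>\<^sup>2 * d_s h x n k))"
    by (simp add: fun_eq_iff w_def algebra_simps)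
  have scheme: "d_tb \<tau> (d_t \<tau> x) n k - \<alpha>\<^sup>2 * d_sb h (d_s h x) n k + d_sb h w n k = 0"
    using assms(4) by (simp add: scheme_S_def w_def)
  show "d_tb \<tau> (\<lambda>n k. tgrid \<tau> n k * d_t \<tau> x n k - x n k) n k
    + d_sb h (\<lambda>n k. tgrid \<tau> n k / (shift_t (d_s h x) n k * shift_tb (d_s h x) n k)
                  - tgrid \<tau> n k * \<alpha>\<^sup>2 * d_s h x n k) n k = 0"
    unfolding flux d_tb_time_weighted_d_t d_sb_tgrid_mult d_sb_diff d_sb_const_mult
    using arg_cong[OF scheme, of "(*) (tgrid \<tau> n k)"] by (simp add: algebra_simps)
qed

end
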